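(* Let $n\ge1$, $\mathcal{K}=\{\texttt{a},\texttt{b}\}$, $\epsilon\ge0$ and $p=e^\epsilon/(1+e^\epsilon)$. For the uniform prior $\pi$ on $\mathcal{K}^n$ and the single-target gain function $g_{\rm T}$, $$V_{\rm T}[\pi\triangleright\mathbf{N}\mathbf{S}]=\frac12+\frac{1}{2^n}(2p-1)\binom{n-1}{\lfloor\frac{n-1}{2}\rfloor}.$$
   Context: A dataset is $x=(x_0,\dots,x_{n-1})\in\mathcal{K}^n$; its histogram $h(x)$ is the map $\kappa\mapsto|\{i:x_i=\kappa\}|$; $\#z$ is the number of datasets with histogram $z$. Full $k$-RR channel (with $k=2$) $\mathbf{N}:\mathcal{K}^n\to\mathcal{K}^n$: $\mathbf{N}_{x,y}=\prod_{i}q(y_i\mid x_i)$, $q(b\mid a)=p$ if $b=a$, $1-p$ otherwise. Shuffle channel $\mathbf{S}:\mathcal{K}^n\to\mathcal{K}^n$: $\mathbf{S}_{x,y}=1/\#h(x)$ if $h(y)=h(x)$, else $0$. $\mathbf{N}\mathbf{S}$ is the matrix product. Uniform prior $\pi_x=1/2^n$. Single-target gain function: $\mathcal{W}=\mathcal{K}$, $g_{\rm T}(w,x)=1$ if $x_0=w$, else $0$. Posterior vulnerability: $V_{\rm T}[\pi\triangleright\mathbf{C}]=\sum_{y}\max_{w}\sum_{x}\pi_x\mathbf{C}_{x,y}g_{\rm T}(w,x)$. *)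

theory Defs
  imports Complex_Main
begin

datatype K = A | B

definition datasets :: "nat \<Rightarrow> K list set" where
  "datasets n = {x. length x = n}"

definition hist :: "K list \<Rightarrow> K \<Rightarrow> nat" where
  "hist x = (\<lambda>\<kappa>. card {i. i < length x \<and> x ! i = \<kappa>})"

definition numHist :: "nat \<Rightarrow> (K \<Rightarrow> nat) \<Rightarrow> nat" where
  "numHist n z = card {x \<in> datasets n. hist x = z}"

definition krr :: "real \<Rightarrow> K \<Rightarrow> K \<Rightarrow> real" where
  "krr p b a = (if b = a then p else 1 - p)"

definition Nch :: "nat \<Rightarrow> real \<Rightarrow> K list \<Rightarrow> K list \<Rightarrow> real" where
  "Nch n p x y = (\<Prod>i<n. krr p (y ! i) (x ! i))"

definition Sch :: "nat \<Rightarrow> K list \<Rightarrow> K list \<Rightarrow> real" where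
  "Sch n x y = (if hist y = hist x then 1 / real (numHist n (hist x)) else 0)"

definition NSch :: "nat \<Rightarrow> real \<Rightarrow> K list \<Rightarrow> K list \<Rightarrow> real" where
  "NSch n p x y = (\<Sum>z\<in>datasets n. Nch n p x z * Sch n z y)"

definition prior :: "nat \<Rightarrow> K list \<Rightarrow> real" where
  "prior n x = 1 / 2 ^ n"

definition gT :: "K \<Rightarrow> K list \<Rightarrow> real" where
  "gT w x = (if x ! 0 = w then 1 else 0)"

definition postVulnT :: "nat \<Rightarrow> (K list \<Rightarrow> real) \<Rightarrow> (K list \<Rightarrow> K list \<Rightarrow> real) \<Rightarrow> real" where
  "postVulnT n \<pi> C =
     (\<Sum>y\<in>datasets n. Max ((\<lambda>w. \<Sum>x\<in>datasets n. \<pi> x * C x y * gT w x) ` {A, B}))"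

end

theory Submission
  imports Defs
begin

text \<open>
  The shuffle forgets everything but the histogram, i.e. the number k of
  B's, and spreads the mass uniformly over the \<open>n choose k\<close> datasets with that
  histogram. Summing the unknown tail of x out of the k-RR noise leaves only the factor
  \<open>q(z\<^sub>0 | w)\<close>, and among the datasets z with k B's exactly
  \<open>b = (n-1) choose k\<close> start with A and \<open>a = (n-1) choose (k-1)\<close> start with B.
  So the best guess for \<open>x\<^sub>0\<close> scores the larger of
  \<open>p b + (1-p) a\<close> and \<open>(1-p) b + p a\<close>, which is
  \<open>(a+b)/2 + (2p-1)/2 |b-a|\<close> because \<open>p \<ge> 1/2\<close>.
  The \<open>n choose k\<close> outputs with k B's cancel the uniform spreading; summed over k, the
  averages give \<open>2^(n-1)\<close> and the absolute differences give the total variation of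
  the unimodal row \<open>(n-1) choose _\<close>, i.e. twice its central entry.
\<close>

lemma UNIV_K: "(UNIV :: K set) = {A, B}"
  using K.exhaust by auto

lemma finite_datasets: "finite (datasets n)"
proof -
  have "datasets n = {xs. set xs \<subseteq> UNIV \<and> length xs = n}"
    by (simp add: datasets_def)
  then show ?thesis
    by (simp add: finite_lists_length_eq UNIV_K)
qed

lemma datasets_Suc: "datasets (Suc m) = Cons A ` datasets m \<union> Cons B ` datasets m"
proof
  show "datasets (Suc m) \<subseteq> Cons A ` datasets m \<union> Cons B ` datasets m"
  proof
    fix x assume "x \<in> datasets (Suc m)"
    then obtain c x' where "x = c # x'" "length x' = m"
      unfolding datasets_def by (cases x) auto
    then show "x \<in> Cons A ` datasets m \<union> Cons B ` datasets m"
      unfolding datasets_def by (cases c) auto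
  qed
qed (auto simp: datasets_def)

lemma sum_datasets_Suc:
  "(\<Sum>z\<in>datasets (Suc m). f z) = (\<Sum>z\<in>datasets m. f (A # z)) + (\<Sum>z\<in>datasets m. f (B # z))"
  unfolding datasets_Suc
  by (subst sum.union_disjoint) (auto simp: finite_datasets sum.reindex)

lemma hist_eq_count_list: "hist x = count_list x"
  by (auto simp: fun_eq_iff hist_def count_list_eq_length_filter length_filter_conv_card eq_commute)

lemma hist_eq_iff_count_B:
  assumes "length x = length y"
  shows "hist x = hist y \<longleftrightarrow> count_list x B = count_list y B"
proof
  assume count_B: "count_list x B = count_list y B"
  have "count_list z A + count_list z B = length z" for z
  proof -
    have "set z \<subseteq> {A, B}"
      by (simp add: UNIV_K[symmetric])
    then show ?thesis
      using sum_count_set[of z "{A, B}"] by simp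
  qed
  then have "count_list x \<kappa> = count_list y \<kappa>" for \<kappa>
    using assms count_B by (cases \<kappa>) (metis add_right_cancel, simp)
  then show "hist x = hist y"
    by (simp add: hist_eq_count_list fun_eq_iff)
qed (simp add: hist_eq_count_list)

lemma card_datasets_count_B: "card {z \<in> datasets n. count_list z B = k} = n choose k"
proof (induction n arbitrary: k)
  case 0
  have "{z \<in> datasets 0. count_list z B = k} = (if k = 0 then {[]} else {})"
    by (auto simp: datasets_def)
  then show ?case by simp
next
  case (Suc n)
  have card_eq_sum: "card {z \<in> datasets m. P z} = (\<Sum>z\<in>datasets m. if P z then 1 else 0)" for m P
    by (simp add: sum.inter_filter[symmetric] finite_datasets)
  show ?case
    using Suc.IH by (cases k) (simp_all add: card_eq_sum sum_datasets_Suc)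
qed

lemma Sch_eq:
  assumes "y \<in> datasets n" "z \<in> datasets n"
  shows "Sch n z y = (if count_list z B = count_list y B then 1 / real (n choose count_list y B) else 0)"
proof -
  have "{x \<in> datasets n. hist x = hist z} = {x \<in> datasets n. count_list x B = count_list z B}"
    using assms(2) by (auto simp: datasets_def hist_eq_iff_count_B)
  then have "numHist n (hist z) = n choose count_list z B"
    by (simp add: numHist_def card_datasets_count_B)
  moreover have "hist y = hist z \<longleftrightarrow> count_list z B = count_list y B"
    using assms by (auto simp: datasets_def hist_eq_iff_count_B)
  ultimately show ?thesis
    by (simp add: Sch_def)
qed

lemma Nch_Cons: "Nch (Suc m) p (a # x) (c # z) = krr p c a * Nch m p x z"
  unfolding Nch_def prod.lessThan_Suc_shift by simp

text \<open>The k-RR matrix is symmetric, so the columns of \<open>Nch\<close> sum to one as well.\<close>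

lemma sum_Nch_column: "z \<in> datasets m \<Longrightarrow> (\<Sum>x\<in>datasets m. Nch m p x z) = 1"
proof (induction m arbitrary: z)
  case 0
  then show ?case by (simp add: datasets_def Nch_def)
next
  case (Suc m)
  then obtain c z' where z: "z = c # z'" "z' \<in> datasets m"
    unfolding datasets_def by (cases z) auto
  show ?case
    using Suc.IH[OF z(2)]
    by (cases c) (simp_all add: z sum_datasets_Suc Nch_Cons krr_def flip: sum_distrib_left)
qed

lemma sum_gT_Nch:
  assumes "z \<in> datasets (Suc m)"
  shows "(\<Sum>x\<in>datasets (Suc m). gT w x * Nch (Suc m) p x z) = krr p (z ! 0) w"
proof -
  obtain c z' where z: "z = c # z'" "z' \<in> datasets m"
    using assms unfolding datasets_def by (cases z) auto
  show ?thesis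
    using sum_Nch_column[OF z(2), of p]
    by (cases w; cases c) (simp_all add: z sum_datasets_Suc Nch_Cons gT_def krr_def flip: sum_distrib_left)
qed

text \<open>
  \<open>binom_shift m j\<close> counts the datasets of length \<open>m + 1\<close> with j B's that start
  with B. Plain \<open>m choose (j - 1)\<close> would give 1 instead of 0 at \<open>j = 0\<close>.
\<close>

definition binom_shift :: "nat \<Rightarrow> nat \<Rightarrow> nat" where
  "binom_shift m j = (if j = 0 then 0 else m choose (j - 1))"

lemma binom_shift_Suc [simp]: "binom_shift m (Suc k) = m choose k"
  by (simp add: binom_shift_def)

lemma sum_count_B_by_head:
  fixes f :: "K \<Rightarrow> 'a::comm_semiring_1"
  shows "(\<Sum>z\<in>{z \<in> datasets (Suc m). count_list z B = k}. f (z ! 0))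
    = f A * of_nat (binom_shift m (Suc k)) + f B * of_nat (binom_shift m k)"
proof -
  have sum_if_const: "(\<Sum>z\<in>datasets m. if P z then c else 0) = c * of_nat (card {z \<in> datasets m. P z})"
    for P and c :: 'a
    by (simp add: sum.inter_filter[symmetric] finite_datasets mult.commute)
  have "{z \<in> datasets m. Suc (count_list z B) = k} =
      (if k = 0 then {} else {z \<in> datasets m. count_list z B = k - 1})"
    by auto
  then have "card {z \<in> datasets m. Suc (count_list z B) = k} = binom_shift m k"
    by (simp add: binom_shift_def card_datasets_count_B)
  then show ?thesis
    unfolding sum.inter_filter[OF finite_datasets] sum_datasets_Suc nth_Cons_0
    by (simp add: sum_if_const card_datasets_count_B)
qed

lemma posterior_gain_NSch:
  assumes "y \<in> datasets (Suc m)"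
  defines "k \<equiv> count_list y B"
  shows "(\<Sum>x\<in>datasets (Suc m). prior (Suc m) x * NSch (Suc m) p x y * gT w x)
    = (krr p A w * binom_shift m (Suc k) + krr p B w * binom_shift m k) / (2 ^ Suc m * real (Suc m choose k))"
proof -
  let ?n = "Suc m"
  define L where "L = {z \<in> datasets ?n. count_list z B = k}"
  have L_sub: "L \<subseteq> datasets ?n"
    by (auto simp: L_def)
  have NSch_eq: "NSch ?n p x y = (\<Sum>z\<in>L. Nch ?n p x z) / (?n choose k)" for x
  proof -
    have "NSch ?n p x y = (\<Sum>z\<in>datasets ?n. if count_list z B = k then Nch ?n p x z / (?n choose k) else 0)"
      unfolding NSch_def by (intro sum.cong) (auto simp: Sch_eq assms)
    then show ?thesis
      by (simp add: L_def sum.inter_filter[symmetric] finite_datasets sum_divide_distrib)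
  qed
  have "(\<Sum>x\<in>datasets ?n. prior ?n x * NSch ?n p x y * gT w x)
      = (\<Sum>x\<in>datasets ?n. \<Sum>z\<in>L. gT w x * Nch ?n p x z) / (2 ^ ?n * real (?n choose k))"
    by (simp add: NSch_eq prior_def sum_divide_distrib sum_distrib_left mult.commute)
  also have "\<dots> = (\<Sum>z\<in>L. \<Sum>x\<in>datasets ?n. gT w x * Nch ?n p x z) / (2 ^ ?n * real (?n choose k))"
    by (subst sum.swap) (rule refl)
  also have "\<dots> = (\<Sum>z\<in>L. krr p (z ! 0) w) / (2 ^ ?n * real (?n choose k))"
    using L_sub by (simp add: sum_gT_Nch subset_iff)
  also have "(\<Sum>z\<in>L. krr p (z ! 0) w) = krr p A w * binom_shift m (Suc k) + krr p B w * binom_shift m k"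
    unfolding L_def by (rule sum_count_B_by_head)
  finally show ?thesis .
qed

lemma max_mix_eq:
  fixes p a b :: real
  assumes "1 / 2 \<le> p"
  shows "max (p * b + (1 - p) * a) ((1 - p) * b + p * a) = (a + b) / 2 + (2 * p - 1) / 2 * \<bar>b - a\<bar>"
proof -
  have max_eq: "max u v = (u + v) / 2 + \<bar>u - v\<bar> / 2" for u v :: real
    by (simp add: max_def abs_if field_simps)
  have "(p * b + (1 - p) * a) - ((1 - p) * b + p * a) = (2 * p - 1) * (b - a)"
    by (simp add: algebra_simps)
  then have "\<bar>(p * b + (1 - p) * a) - ((1 - p) * b + p * a)\<bar> = (2 * p - 1) * \<bar>b - a\<bar>"
    using assms by (simp add: abs_mult)
  then show ?thesis
    unfolding max_eq by (simp add: algebra_simps)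
qed

lemma Max_posterior_gain_NSch:
  assumes "y \<in> datasets (Suc m)" "1 / 2 \<le> p"
  defines "k \<equiv> count_list y B"
  shows "Max ((\<lambda>w. \<Sum>x\<in>datasets (Suc m). prior (Suc m) x * NSch (Suc m) p x y * gT w x) ` {A, B})
    = ((real (binom_shift m k) + binom_shift m (Suc k)) / 2
        + (2 * p - 1) / 2 * \<bar>real (binom_shift m (Suc k)) - binom_shift m k\<bar>)
      / (2 ^ Suc m * real (Suc m choose k))"
proof -
  let ?a = "real (binom_shift m k)" and ?b = "real (binom_shift m (Suc k))"
    and ?d = "2 ^ Suc m * real (Suc m choose k)"
  have "Max ((\<lambda>w. \<Sum>x\<in>datasets (Suc m). prior (Suc m) x * NSch (Suc m) p x y * gT w x) ` {A, B})
      = max ((p * ?b + (1 - p) * ?a) / ?d) (((1 - p) * ?b + p * ?a) / ?d)"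
    using assms(1) by (simp add: posterior_gain_NSch k_def krr_def)
  also have "\<dots> = max (p * ?b + (1 - p) * ?a) ((1 - p) * ?b + p * ?a) / ?d"
    by (simp add: max_divide_distrib_right)
  finally show ?thesis
    by (simp add: max_mix_eq[OF assms(2)])
qed

lemma sum_datasets_by_count_B:
  fixes F :: "nat \<Rightarrow> 'a::comm_semiring_1"
  shows "(\<Sum>y\<in>datasets n. F (count_list y B)) = (\<Sum>k\<le>n. of_nat (n choose k) * F k)"
proof -
  have "count_list y B \<le> n" if "y \<in> datasets n" for y
    using that count_le_length by (auto simp: datasets_def)
  then have "(\<Sum>y\<in>datasets n. F (count_list y B))
      = (\<Sum>k\<le>n. \<Sum>y\<in>{y \<in> datasets n. count_list y B = k}. F (count_list y B))"
    by (intro sum.group[symmetric]) (auto simp: finite_datasets)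
  also have "\<dots> = (\<Sum>k\<le>n. of_nat (n choose k) * F k)"
    by (simp add: card_datasets_count_B)
  finally show ?thesis .
qed

lemma sum_abs_diff_unimodal:
  fixes f :: "nat \<Rightarrow> 'a::linordered_idom"
  assumes "h \<le> N"
    and up: "\<And>k. k < h \<Longrightarrow> f k \<le> f (Suc k)"
    and down: "\<And>k. h \<le> k \<Longrightarrow> k < N \<Longrightarrow> f (Suc k) \<le> f k"
  shows "(\<Sum>k<N. \<bar>f (Suc k) - f k\<bar>) = (f h - f 0) + (f h - f N)"
proof -
  have "(\<Sum>k<N. \<bar>f (Suc k) - f k\<bar>) = (\<Sum>k<h. \<bar>f (Suc k) - f k\<bar>) + (\<Sum>k=h..<N. \<bar>f (Suc k) - f k\<bar>)"
    using assms(1) by (simp add: lessThan_atLeast0 sum.atLeastLessThan_concat)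
  also have "(\<Sum>k<h. \<bar>f (Suc k) - f k\<bar>) = (\<Sum>k<h. f (Suc k) - f k)"
    using up by (intro sum.cong) (simp_all add: abs_of_nonneg)
  also have "\<dots> = f h - f 0"
    by (rule sum_lessThan_telescope)
  also have "(\<Sum>k=h..<N. \<bar>f (Suc k) - f k\<bar>) = - (\<Sum>k=h..<N. f (Suc k) - f k)"
    using down by (simp add: abs_of_nonpos flip: sum_negf)
  also have "(\<Sum>k=h..<N. f (Suc k) - f k) = f N - f h"
    using assms(1) by (rule sum_Suc_diff')
  finally show ?thesis
    by simp
qed

lemma sum_abs_diff_binom_shift:
  "(\<Sum>k\<le>Suc m. \<bar>real (binom_shift m (Suc k)) - binom_shift m k\<bar>) = 2 * (m choose (m div 2))"
proof -
  let ?f = "\<lambda>k. real (binom_shift m k)"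
  have "(\<Sum>k<Suc (Suc m). \<bar>?f (Suc k) - ?f k\<bar>) = (?f (Suc (m div 2)) - ?f 0) + (?f (Suc (m div 2)) - ?f (Suc (Suc m)))"
  proof (rule sum_abs_diff_unimodal)
    show "?f k \<le> ?f (Suc k)" if "k < Suc (m div 2)" for k
      using that binomial_mono[of "k - 1" k m] by (cases k) (simp_all add: binom_shift_def)
    show "?f (Suc k) \<le> ?f k" if "Suc (m div 2) \<le> k" "k < Suc (Suc m)" for k
      using that binomial_antimono[of "k - 1" k m]
      by (cases "k = Suc m") (simp_all add: binom_shift_def binomial_eq_0)
  qed simp
  then show ?thesis
    by (simp add: lessThan_Suc_atMost binom_shift_def binomial_eq_0)
qed

lemma sum_binom_shift: "(\<Sum>k\<le>Suc m. real (binom_shift m k)) = 2 ^ m"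
proof -
  have "(\<Sum>k\<le>Suc m. binom_shift m k) = 2 ^ m"
    by (simp add: sum.atMost_Suc_shift choose_row_sum binom_shift_def del: sum.atMost_Suc)
  then show ?thesis
    by (metis of_nat_sum of_nat_numeral of_nat_power)
qed

lemma sum_binom_shift_Suc: "(\<Sum>k\<le>Suc m. real (binom_shift m (Suc k))) = 2 ^ m"
proof -
  have "(\<Sum>k\<le>Suc m. binom_shift m (Suc k)) = 2 ^ m"
    by (simp add: choose_row_sum binomial_eq_0)
  then show ?thesis
    by (metis of_nat_sum of_nat_numeral of_nat_power)
qed

lemma sum_mixed_gain_binom_shift:
  "(\<Sum>k\<le>Suc m. (real (binom_shift m k) + binom_shift m (Suc k)) / 2
      + c / 2 * \<bar>real (binom_shift m (Suc k)) - binom_shift m k\<bar>)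
    = 2 ^ m + c * (m choose (m div 2))"
proof -
  have "(\<Sum>k\<le>Suc m. (real (binom_shift m k) + binom_shift m (Suc k)) / 2
      + c / 2 * \<bar>real (binom_shift m (Suc k)) - binom_shift m k\<bar>)
    = (\<Sum>k\<le>Suc m. real (binom_shift m k)) / 2 + (\<Sum>k\<le>Suc m. real (binom_shift m (Suc k))) / 2
      + c / 2 * (\<Sum>k\<le>Suc m. \<bar>real (binom_shift m (Suc k)) - binom_shift m k\<bar>)"
    by (simp only: add_divide_distrib sum.distrib sum_divide_distrib sum_distrib_left)
  then show ?thesis
    unfolding sum_binom_shift sum_binom_shift_Suc sum_abs_diff_binom_shift by simp
qed

theorem mainTheorem12:
  fixes n :: nat and \<epsilon> p :: real
  assumes "n \<ge> 1" and "\<epsilon> \<ge> 0" and "p = exp \<epsilon> / (1 + exp \<epsilon>)"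
  shows "postVulnT n (prior n) (NSch n p) =
           1 / 2 + 1 / 2 ^ n * (2 * p - 1) * real ((n - 1) choose ((n - 1) div 2))"
proof -
  obtain m where n: "n = Suc m"
    using assms(1) by (cases n) auto
  have "1 \<le> exp \<epsilon>"
    using assms(2) by simp
  then have p: "1 / 2 \<le> p"
    using assms(3) by (simp add: field_simps add_pos_pos)
  define G where "G k = (real (binom_shift m k) + binom_shift m (Suc k)) / 2
    + (2 * p - 1) / 2 * \<bar>real (binom_shift m (Suc k)) - binom_shift m k\<bar>" for k
  have "postVulnT n (prior n) (NSch n p)
      = (\<Sum>y\<in>datasets n. G (count_list y B) / (2 ^ n * real (n choose count_list y B)))"
    unfolding postVulnT_def n G_def by (intro sum.cong refl) (simp only: Max_posterior_gain_NSch p)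
  also have "\<dots> = (\<Sum>k\<le>n. (n choose k) * (G k / (2 ^ n * real (n choose k))))"
    by (rule sum_datasets_by_count_B)
  also have "\<dots> = (\<Sum>k\<le>n. G k) / 2 ^ n"
    by (simp add: sum_divide_distrib binomial_eq_0_iff)
  also have "(\<Sum>k\<le>n. G k) = 2 ^ m + (2 * p - 1) * (m choose (m div 2))"
    unfolding G_def n by (rule sum_mixed_gain_binom_shift)
  finally show ?thesis
    by (simp add: n field_simps)
qed

end
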